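(* Let $n\ge3$ and $B_n=\langle a,b\mid ba=b^n\rangle$. 1. For every reduced atomic cancellative monoid $H$ whose monoid of relations $\sim_H$ is finitely generated, $\mathcal L(H)\ne\mathcal L(B_n)$. 2. $B_n$ is not a transfer Krull monoid.
   Context: $B_n$ is the monoid with generators $a,b$ and single relation $ba=b^n$ (reduced, atomic, unit-cancellative, with atoms $a,b$). For an atomic monoid $H$, $\mathsf L(y)$ is the set of $k$ with $y$ a product of $k$ atoms ($\mathsf L(\text{unit})=\{0\}$), $\mathcal L(H)=\{\mathsf L(y)\mid y\in H\}$. For reduced atomic $H$, $\mathsf Z(H)$ is the free monoid on the atoms (free abelian if $H$ is commutative), $\pi$ the canonical epimorphism, and $\sim_H=\{(x,y)\in\mathsf Z(H)^2\mid\pi(x)=\pi(y)\}$ the monoid of relations. For atomic unit-cancellative monoids $H,B$ (unit-cancellative: $x=xu$ or $x=ux$ implies $u$ a unit), a homomorphism $\theta:H\to B$ is a weak transfer homomorphism if (T1) $B=B^\times\theta(H)B^\times$ and $\theta^{-1}(B^\times)=H^\times$, and (WT2) whenever $a\in H$ and $\theta(a)=v_1\cdots v_r$ with atoms $v_i$ of $B$, there are atoms $u_1,\dots,u_r$ of $H$ and a permutation $\tau$ of $[1,r]$ with $a=u_1\cdots u_r$ and $\theta(u_i)\in B^\times v_{\tau(i)}B^\times$ for all $i$. A commutative monoid is Krull if its associated reduced monoid is a saturated submonoid of a free abelian monoid (a submonoid $S\subset D$ is saturated if $a\in D$, $b\in S$, $ab\in S$ imply $a\in S$). An atomic unit-cancellative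 monoid $H$ is transfer Krull if there exist a commutative Krull monoid $B$ and a weak transfer homomorphism $H\to B$. *)

theory Defs
  imports "HOL-Algebra.Group" "HOL-Library.Multiset"
begin

definition lprod :: "'a monoid \<Rightarrow> 'a list \<Rightarrow> 'a" where
  "lprod H xs = foldr (\<lambda>x acc. x \<otimes>\<^bsub>H\<^esub> acc) xs \<one>\<^bsub>H\<^esub>"

definition mon_atom :: "'a monoid \<Rightarrow> 'a \<Rightarrow> bool" where
  "mon_atom H u \<longleftrightarrow> u \<in> carrier H \<and> u \<notin> Units H \<and>
     (\<forall>x\<in>carrier H. \<forall>y\<in>carrier H. u = x \<otimes>\<^bsub>H\<^esub> y \<longrightarrow> x \<in> Units H \<or> y \<in> Units H)"

definition mon_atoms :: "'a monoid \<Rightarrow> 'a set" where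
  "mon_atoms H = {u. mon_atom H u}"

definition mon_reduced :: "'a monoid \<Rightarrow> bool" where
  "mon_reduced H \<longleftrightarrow> Units H = {\<one>\<^bsub>H\<^esub>}"

definition mon_atomic :: "'a monoid \<Rightarrow> bool" where
  "mon_atomic H \<longleftrightarrow> (\<forall>y \<in> carrier H - Units H.
     \<exists>us. set us \<subseteq> mon_atoms H \<and> lprod H us = y)"

definition mon_cancellative :: "'a monoid \<Rightarrow> bool" where
  "mon_cancellative H \<longleftrightarrow>
     (\<forall>a\<in>carrier H. \<forall>b\<in>carrier H. \<forall>c\<in>carrier H.
        (a \<otimes>\<^bsub>H\<^esub> b = a \<otimes>\<^bsub>H\<^esub> c \<longrightarrow> b = c) \<and>
        (b \<otimes>\<^bsub>H\<^esub> a = c \<otimes>\<^bsub>H\<^esub> a \<longrightarrow> b = c))"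

definition mon_unit_cancellative :: "'a monoid \<Rightarrow> bool" where
  "mon_unit_cancellative H \<longleftrightarrow>
     (\<forall>x\<in>carrier H. \<forall>u\<in>carrier H.
        (x = x \<otimes>\<^bsub>H\<^esub> u \<or> x = u \<otimes>\<^bsub>H\<^esub> x) \<longrightarrow> u \<in> Units H)"

definition lengths :: "'a monoid \<Rightarrow> 'a \<Rightarrow> nat set" where
  "lengths H y = (if y \<in> Units H then {0}
     else {k. \<exists>us. length us = k \<and> set us \<subseteq> mon_atoms H \<and> lprod H us = y})"

definition system_of_lengths :: "'a monoid \<Rightarrow> nat set set" where
  "system_of_lengths H = lengths H ` carrier H"

text \<open>Factorizations are words over the atoms (free monoid), resp. multisets of
  atoms (free abelian monoid) when H is commutative; pi is the product map.\<close>

definition rel_list :: "'a monoid \<Rightarrow> ('a list \<times> 'a list) set" where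
  "rel_list H = {(xs, ys). set xs \<subseteq> mon_atoms H \<and> set ys \<subseteq> mon_atoms H
                          \<and> lprod H xs = lprod H ys}"

definition rel_mset :: "'a monoid \<Rightarrow> ('a multiset \<times> 'a multiset) set" where
  "rel_mset H = {(mset xs, mset ys) | xs ys. (xs, ys) \<in> rel_list H}"

definition relations_fg :: "'a monoid \<Rightarrow> bool" where
  "relations_fg H \<longleftrightarrow>
     (if comm_monoid H then
        (\<exists>S. finite S \<and> S \<subseteq> rel_mset H \<and>
           (\<forall>p\<in>rel_mset H. \<exists>ps. set ps \<subseteq> S \<and>
               p = (sum_list (map fst ps), sum_list (map snd ps))))
      else
        (\<exists>S. finite S \<and> S \<subseteq> rel_list H \<and>
           (\<forall>p\<in>rel_list H. \<exists>ps. set ps \<subseteq> S \<and>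
               p = (concat (map fst ps), concat (map snd ps)))))"

datatype gen = Ga | Gb

inductive bn_cong :: "nat \<Rightarrow> gen list \<Rightarrow> gen list \<Rightarrow> bool" for n where
  base: "bn_cong n [Gb, Ga] (replicate n Gb)"
| refl: "bn_cong n u u"
| sym: "bn_cong n u v \<Longrightarrow> bn_cong n v u"
| trans: "bn_cong n u v \<Longrightarrow> bn_cong n v w \<Longrightarrow> bn_cong n u w"
| ctxt: "bn_cong n u v \<Longrightarrow> bn_cong n (x @ u @ y) (x @ v @ y)"

definition bn_class :: "nat \<Rightarrow> gen list \<Rightarrow> gen list set" where
  "bn_class n u = {w. bn_cong n w u}"

definition Bn :: "nat \<Rightarrow> gen list set monoid" where
  "Bn n = \<lparr> carrier = range (bn_class n),
            monoid.mult = (\<lambda>X Y. {w. \<exists>x\<in>X. \<exists>y\<in>Y. bn_cong n w (x @ y)}),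
            one = bn_class n [] \<rparr>"

definition mon_hom :: "'a monoid \<Rightarrow> 'b monoid \<Rightarrow> ('a \<Rightarrow> 'b) \<Rightarrow> bool" where
  "mon_hom H B f \<longleftrightarrow> (\<forall>x\<in>carrier H. f x \<in> carrier B) \<and> f \<one>\<^bsub>H\<^esub> = \<one>\<^bsub>B\<^esub> \<and>
     (\<forall>x\<in>carrier H. \<forall>y\<in>carrier H. f (x \<otimes>\<^bsub>H\<^esub> y) = f x \<otimes>\<^bsub>B\<^esub> f y)"

definition weak_transfer_hom :: "'a monoid \<Rightarrow> 'b monoid \<Rightarrow> ('a \<Rightarrow> 'b) \<Rightarrow> bool" where
  "weak_transfer_hom H B \<theta> \<longleftrightarrow>
     mon_hom H B \<theta> \<and>
     \<comment> \<open>(T1)\<close>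
     carrier B = {u \<otimes>\<^bsub>B\<^esub> \<theta> h \<otimes>\<^bsub>B\<^esub> v | u h v. u \<in> Units B \<and> h \<in> carrier H \<and> v \<in> Units B} \<and>
     {h \<in> carrier H. \<theta> h \<in> Units B} = Units H \<and>
     \<comment> \<open>(WT2)\<close>
     (\<forall>a\<in>carrier H. \<forall>vs. set vs \<subseteq> mon_atoms B \<and> \<theta> a = lprod B vs \<longrightarrow>
        (\<exists>us \<tau>. length us = length vs \<and> set us \<subseteq> mon_atoms H \<and> a = lprod H us \<and>
           bij_betw \<tau> {..<length vs} {..<length vs} \<and>
           (\<forall>i<length vs. \<exists>w\<in>Units B. \<exists>w'\<in>Units B.
              \<theta> (us ! i) = w \<otimes>\<^bsub>B\<^esub> (vs ! \<tau> i) \<otimes>\<^bsub>B\<^esub> w')))"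

text \<open>A commutative monoid B is Krull if its associated reduced monoid B/B^x is
  (isomorphic to) a saturated submonoid of a free abelian monoid F(P), P of type 'p.
  Equivalently: a homomorphism phi from B into F(P) whose fibres are exactly the
  classes of associated elements and whose image is saturated in F(P).\<close>
definition krull_monoid :: "'b monoid \<Rightarrow> 'p itself \<Rightarrow> bool" where
  "krull_monoid B _ \<longleftrightarrow> comm_monoid B \<and>
     (\<exists>(P :: 'p set) (\<phi> :: 'b \<Rightarrow> 'p multiset).
        (\<forall>x\<in>carrier B. set_mset (\<phi> x) \<subseteq> P) \<and>
        \<phi> \<one>\<^bsub>B\<^esub> = {#} \<and>
        (\<forall>x\<in>carrier B. \<forall>y\<in>carrier B. \<phi> (x \<otimes>\<^bsub>B\<^esub> y) = \<phi> x + \<phi> y) \<and>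
        (\<forall>x\<in>carrier B. \<forall>y\<in>carrier B. \<phi> x = \<phi> y \<longleftrightarrow> (\<exists>u\<in>Units B. x = y \<otimes>\<^bsub>B\<^esub> u)) \<and>
        (\<forall>a. set_mset a \<subseteq> P \<longrightarrow>
           (\<forall>y\<in>carrier B. a + \<phi> y \<in> \<phi> ` carrier B \<longrightarrow> a \<in> \<phi> ` carrier B)))"

text \<open>H is transfer Krull (witnessed with a Krull monoid of type 'b and a free abelian
  monoid with basis in type 'p).\<close>
definition transfer_krull :: "'a monoid \<Rightarrow> 'b itself \<Rightarrow> 'p itself \<Rightarrow> bool" where
  "transfer_krull H _ _ \<longleftrightarrow>
     monoid H \<and> mon_atomic H \<and> mon_unit_cancellative H \<and>
     (\<exists>(B :: 'b monoid) \<theta>. krull_monoid B TYPE('p) \<and> mon_atomic B \<and>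
        mon_unit_cancellative B \<and> weak_transfer_hom H B \<theta>)"

end

theory Submission
  imports Defs
begin

text \<open>Every word over \<open>a, b\<close> is equivalent in \<open>B\<^sub>n\<close> to a normal form \<open>a^i b^j\<close>, and
  each rewriting step \<open>ba \<rightarrow> b^n\<close> lengthens a word by \<open>n - 2\<close>. Hence any two lengths \<open>k \<noteq> 0\<close>
  and \<open>l\<close> of the same element satisfy \<open>l + (n - 2) \<le> (n - 1) k\<close>, while \<open>b a^(s-1) = b^(1+(s-1)(n-1))\<close>
  puts \<open>s\<close> and \<open>1 + (s - 1)(n - 1)\<close> into one length set. A cancellative monoid with the same
  system of lengths inherits both properties for its relations. If finitely many relations, with left
  sides of at most \<open>M\<close> atoms, generated all of them, a relation of lengths \<open>M + 1\<close> and
  \<open>1 + M(n - 1)\<close> would be a product of at least two nontrivial generators, each of which falls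
  \<open>n - 2\<close> short of the maximal ratio; this leaves no room for the right-hand length.

  A weak transfer homomorphism \<open>\<theta>\<close> into a commutative atomic monoid sends the atom \<open>b\<close> to an atom,
  and then \<open>\<theta>(ab) = \<theta>(ba) = \<theta>(b)^n\<close> lifts to a factorization of \<open>ab\<close> of length \<open>n\<close>,
  whereas \<open>ab\<close> has only factorizations of length 2.\<close>

section \<open>Factorizations in cancellative monoids\<close>

lemma lprod_Nil [simp]: "lprod H [] = \<one>\<^bsub>H\<^esub>"
  and lprod_Cons [simp]: "lprod H (x # xs) = x \<otimes>\<^bsub>H\<^esub> lprod H xs"
  by (simp_all add: lprod_def)

lemma lprod_closed: "monoid H \<Longrightarrow> set xs \<subseteq> carrier H \<Longrightarrow> lprod H xs \<in> carrier H"
  by (induction xs) (auto intro: monoid.m_closed monoid.one_closed)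

lemma mon_atoms_subset_carrier: "mon_atoms H \<subseteq> carrier H"
  by (auto simp: mon_atoms_def mon_atom_def)

lemma Units_factor_if_cancellative:
  assumes "monoid H" "mon_cancellative H" and x: "x \<in> carrier H" and y: "y \<in> carrier H"
    and xy: "x \<otimes>\<^bsub>H\<^esub> y \<in> Units H"
  shows "x \<in> Units H"
proof -
  interpret monoid H by fact
  obtain z where z: "z \<in> carrier H" "x \<otimes>\<^bsub>H\<^esub> y \<otimes>\<^bsub>H\<^esub> z = \<one>\<^bsub>H\<^esub>"
    using xy by (auto simp: Units_def)
  have "x \<otimes>\<^bsub>H\<^esub> (y \<otimes>\<^bsub>H\<^esub> z \<otimes>\<^bsub>H\<^esub> x) = x \<otimes>\<^bsub>H\<^esub> \<one>\<^bsub>H\<^esub>"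
    using x y z by (metis l_one m_assoc m_closed r_one)
  then have "y \<otimes>\<^bsub>H\<^esub> z \<otimes>\<^bsub>H\<^esub> x = \<one>\<^bsub>H\<^esub>"
    using assms(2) x y z unfolding mon_cancellative_def by (meson m_closed one_closed)
  then show ?thesis
    using x y z by (auto simp: Units_def m_assoc intro!: bexI[of _ "y \<otimes>\<^bsub>H\<^esub> z"])
qed

lemma lprod_atoms_not_Unit:
  assumes "monoid H" "mon_cancellative H" and "set xs \<subseteq> mon_atoms H" and "xs \<noteq> []"
  shows "lprod H xs \<notin> Units H"
proof
  assume unit: "lprod H xs \<in> Units H"
  obtain u r where xs: "xs = u # r" using assms(4) by (cases xs) auto
  have "set r \<subseteq> carrier H" using assms(3) mon_atoms_subset_carrier[of H] xs by auto
  then have "u \<in> Units H"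
    using Units_factor_if_cancellative[OF assms(1,2)] unit assms(3) xs lprod_closed[OF assms(1)]
    by (auto simp: mon_atoms_def mon_atom_def)
  then show False using assms(3) xs by (auto simp: mon_atoms_def mon_atom_def)
qed

lemma rel_list_Nil:
  assumes "monoid H" "mon_cancellative H" and "([], ys) \<in> rel_list H"
  shows "ys = []"
proof (rule ccontr)
  assume "ys \<noteq> []"
  moreover have "set ys \<subseteq> mon_atoms H" "lprod H ys = \<one>\<^bsub>H\<^esub>"
    using assms(3) by (simp_all add: rel_list_def)
  ultimately show False
    using lprod_atoms_not_Unit[OF assms(1,2)] monoid.Units_one_closed[OF assms(1)] by metis
qed

lemma length_mem_lengths:
  assumes "monoid H" "mon_cancellative H" and "set xs \<subseteq> mon_atoms H" and "xs \<noteq> []"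
  shows "length xs \<in> lengths H (lprod H xs)"
  using assms lprod_atoms_not_Unit[OF assms] by (auto simp: lengths_def)

lemma weak_transfer_hom_length_mem_lengths:
  assumes "weak_transfer_hom H B \<theta>" and "a \<in> carrier H" "a \<notin> Units H"
    and "set vs \<subseteq> mon_atoms B" "\<theta> a = lprod B vs"
  shows "length vs \<in> lengths H a"
proof -
  obtain us where "length us = length vs" "set us \<subseteq> mon_atoms H" "a = lprod H us"
    using assms unfolding weak_transfer_hom_def by blast
  then show ?thesis using assms(3) by (auto simp: lengths_def)
qed

section \<open>Monoids of relations without finite generating sets\<close>

lemma sum_list_le_mult_count_nonzero:
  fixes f :: "'x \<Rightarrow> nat"
  assumes "\<forall>x\<in>set xs. f x \<le> M"
  shows "(\<Sum>x\<leftarrow>xs. f x) \<le> M * length (filter (\<lambda>x. f x \<noteq> 0) xs)"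
  using assms by (induction xs) auto

lemma sum_list_add_mult_count_nonzero_le:
  fixes f g :: "'x \<Rightarrow> nat"
  assumes "\<forall>x\<in>set xs. (f x = 0 \<longrightarrow> g x = 0) \<and> (f x \<noteq> 0 \<longrightarrow> g x + d \<le> (d + 1) * f x)"
  shows "(\<Sum>x\<leftarrow>xs. g x) + d * length (filter (\<lambda>x. f x \<noteq> 0) xs) \<le> (d + 1) * (\<Sum>x\<leftarrow>xs. f x)"
  using assms by (induction xs) (auto simp: algebra_simps)

lemma no_finite_generating_set_if_length_spread:
  fixes R :: "('x \<times> 'x) set" and sz :: "'x \<Rightarrow> nat" and cat :: "'x list \<Rightarrow> 'x"
  assumes sz_cat: "\<And>xs. sz (cat xs) = (\<Sum>x\<leftarrow>xs. sz x)"
    and zero: "\<And>x y. (x, y) \<in> R \<Longrightarrow> sz x = 0 \<Longrightarrow> sz y = 0"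
    and bound: "\<And>x y. (x, y) \<in> R \<Longrightarrow> sz x \<noteq> 0 \<Longrightarrow> sz y + d \<le> (d + 1) * sz x"
    and spread: "\<And>s. s \<noteq> 0 \<Longrightarrow> \<exists>(x, y)\<in>R. sz x = s \<and> sz y = 1 + (s - 1) * (d + 1)"
    and "d \<noteq> 0"
  shows "\<nexists>S. finite S \<and> S \<subseteq> R \<and> (\<forall>p\<in>R. \<exists>ps. set ps \<subseteq> S \<and> p = (cat (map fst ps), cat (map snd ps)))"
proof
  assume "\<exists>S. finite S \<and> S \<subseteq> R \<and> (\<forall>p\<in>R. \<exists>ps. set ps \<subseteq> S \<and> p = (cat (map fst ps), cat (map snd ps)))"
  then obtain S where S: "finite S" "S \<subseteq> R"
    and gen: "\<forall>p\<in>R. \<exists>ps. set ps \<subseteq> S \<and> p = (cat (map fst ps), cat (map snd ps))"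
    by blast
  define M where "M = Max ((\<lambda>p. sz (fst p)) ` S)"
  have M: "sz (fst p) \<le> M" if "p \<in> S" for p
    unfolding M_def using S(1) that by (auto intro: Max_ge)
  obtain x y where xy: "(x, y) \<in> R" "sz x = M + 1" "sz y = 1 + M * (d + 1)"
    using spread[of "M + 1"] by auto
  then obtain ps where ps: "set ps \<subseteq> S" "x = cat (map fst ps)" "y = cat (map snd ps)"
    using gen by blast
  define c where "c = length (filter (\<lambda>p. sz (fst p) \<noteq> 0) ps)"
  have "(\<Sum>p\<leftarrow>ps. sz (snd p)) + d * c \<le> (d + 1) * (\<Sum>p\<leftarrow>ps. sz (fst p))"
    unfolding c_def using ps(1) S(2) zero bound
    by (intro sum_list_add_mult_count_nonzero_le) fastforce
  then have long: "1 + M * (d + 1) + d * c \<le> (d + 1) * (M + 1)"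
    using xy ps by (simp add: sz_cat o_def)
  have "\<forall>p\<in>set ps. sz (fst p) \<le> M" using ps(1) M by blast
  then have "M + 1 \<le> M * c"
    using sum_list_le_mult_count_nonzero[of ps "\<lambda>p. sz (fst p)" M] ps xy
    by (simp add: sz_cat o_def c_def)
  then have "2 \<le> c" by (cases c) auto
  then have "d * 2 \<le> d * c" by (rule mult_le_mono2)
  then show False using long \<open>d \<noteq> 0\<close> by (simp add: algebra_simps)
qed

lemma not_relations_fg_if_length_spread:
  assumes zero: "\<And>ys. ([], ys) \<in> rel_list H \<Longrightarrow> ys = []"
    and bound: "\<And>xs ys. (xs, ys) \<in> rel_list H \<Longrightarrow> xs \<noteq> [] \<Longrightarrow> length ys + d \<le> (d + 1) * length xs"
    and spread: "\<And>s. s \<noteq> 0 \<Longrightarrow> \<exists>(xs, ys) \<in> rel_list H. length xs = s \<and> length ys = 1 + (s - 1) * (d + 1)"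
    and "d \<noteq> 0"
  shows "\<not> relations_fg H"
proof (cases "comm_monoid H")
  case True
  have "\<nexists>S. finite S \<and> S \<subseteq> rel_mset H \<and>
      (\<forall>p\<in>rel_mset H. \<exists>ps. set ps \<subseteq> S \<and> p = (sum_list (map fst ps), sum_list (map snd ps)))"
  proof (rule no_finite_generating_set_if_length_spread[where sz = size and d = d])
    show "size (sum_list xs) = (\<Sum>x\<leftarrow>xs. size x)" for xs :: "'a multiset list"
      by (induction xs) auto
    show "size y = 0" if "(x, y) \<in> rel_mset H" "size x = 0" for x y
      using that zero by (auto simp: rel_mset_def)
    show "size y + d \<le> (d + 1) * size x" if "(x, y) \<in> rel_mset H" "size x \<noteq> 0" for x y
      using that bound by (auto simp: rel_mset_def)
    show "\<exists>(x, y)\<in>rel_mset H. size x = s \<and> size y = 1 + (s - 1) * (d + 1)" if "s \<noteq> 0" for s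
      using spread[OF that] by (force simp: rel_mset_def)
  qed fact
  with True show ?thesis by (simp add: relations_fg_def)
next
  case False
  have "\<nexists>S. finite S \<and> S \<subseteq> rel_list H \<and>
      (\<forall>p\<in>rel_list H. \<exists>ps. set ps \<subseteq> S \<and> p = (concat (map fst ps), concat (map snd ps)))"
    by (rule no_finite_generating_set_if_length_spread[where sz = length and d = d])
      (use zero bound spread \<open>d \<noteq> 0\<close> in \<open>auto simp: length_concat sum_list_sum_nth\<close>)
  with False show ?thesis by (simp add: relations_fg_def)
qed

section \<open>Normal forms in \<open>B\<^sub>n\<close>\<close>

text \<open>\<open>nf n w = (i, j)\<close> encodes the normal form \<open>a^i b^j\<close> of \<open>w\<close>: moving \<open>b\<close> to the left turns
  \<open>b a^i\<close> into \<open>b^(1 + i(n - 1))\<close>.\<close>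

fun nf :: "nat \<Rightarrow> gen list \<Rightarrow> nat \<times> nat" where
  "nf n [] = (0, 0)"
| "nf n (Ga # w) = (case nf n w of (i, j) \<Rightarrow> (Suc i, j))"
| "nf n (Gb # w) = (case nf n w of (i, j) \<Rightarrow> (0, Suc (i * (n - 1) + j)))"

definition nf_mult :: "nat \<Rightarrow> nat \<times> nat \<Rightarrow> nat \<times> nat \<Rightarrow> nat \<times> nat" where
  "nf_mult n p q =
     (if snd p = 0 then (fst p + fst q, snd q) else (fst p, snd p + fst q * (n - 1) + snd q))"

lemma nf_append: "nf n (u @ v) = nf_mult n (nf n u) (nf n v)"
proof (induction u)
  case Nil
  then show ?case by (simp add: nf_mult_def split: prod.splits)
next
  case (Cons c u)
  then show ?case
    by (cases c) (auto simp: nf_mult_def add_mult_distrib split: prod.splits)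
qed

lemma nf_replicate_Gb: "nf n (replicate k Gb) = (0, k)"
  by (induction k) auto

lemma nf_eq_if_bn_cong:
  assumes "1 \<le> n" and "bn_cong n u v"
  shows "nf n u = nf n v"
  using assms(2)
proof (induction rule: bn_cong.induct)
  case base
  then show ?case using assms(1) by (simp add: nf_replicate_Gb)
next
  case (ctxt u v x y)
  then show ?case by (simp add: nf_append)
qed auto

lemma bn_class_eq_iff: "bn_class n u = bn_class n v \<longleftrightarrow> bn_cong n u v"
proof
  assume "bn_class n u = bn_class n v"
  then show "bn_cong n u v"
    unfolding bn_class_def using bn_cong.refl[of n u] by blast
next
  assume "bn_cong n u v"
  then show "bn_class n u = bn_class n v"
    unfolding bn_class_def by (blast intro: bn_cong.trans bn_cong.sym)
qed

lemma nf_eq_if_bn_class_eq: "1 \<le> n \<Longrightarrow> bn_class n u = bn_class n v \<Longrightarrow> nf n u = nf n v"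
  by (simp add: bn_class_eq_iff nf_eq_if_bn_cong)

lemma carrier_Bn: "carrier (Bn n) = range (bn_class n)"
  and one_Bn: "\<one>\<^bsub>Bn n\<^esub> = bn_class n []"
  by (simp_all add: Bn_def)

lemma bn_class_mult: "bn_class n u \<otimes>\<^bsub>Bn n\<^esub> bn_class n v = bn_class n (u @ v)"
proof -
  have "bn_cong n w (u @ v)" if "bn_cong n x u" "bn_cong n y v" "bn_cong n w (x @ y)" for w x y
  proof -
    have "bn_cong n ([] @ x @ y) ([] @ u @ y)" by (rule bn_cong.ctxt[OF that(1)])
    moreover have "bn_cong n (u @ y @ []) (u @ v @ [])" by (rule bn_cong.ctxt[OF that(2)])
    ultimately show ?thesis using that(3) by (auto intro: bn_cong.trans)
  qed
  then show ?thesis unfolding Bn_def bn_class_def by (auto intro: bn_cong.refl)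
qed

lemmas bn_cong_trans [trans] = bn_cong.trans

lemma bn_cong_Gb_replicate_Ga:
  assumes "1 \<le> n"
  shows "bn_cong n (Gb # replicate i Ga) (replicate (1 + i * (n - 1)) Gb)"
proof (induction i)
  case 0
  then show ?case by (simp add: bn_cong.refl)
next
  case (Suc i)
  have "replicate n Gb = replicate (n - 1) Gb @ [Gb]"
    using assms by (cases n) (simp_all add: replicate_append_same)
  then have "bn_cong n (Gb # replicate (Suc i) Ga) (replicate (n - 1) Gb @ Gb # replicate i Ga)"
    using bn_cong.ctxt[OF bn_cong.base, of n "[]" "replicate i Ga"] by simp
  also have "bn_cong n \<dots> (replicate (n - 1) Gb @ replicate (1 + i * (n - 1)) Gb)"
    using bn_cong.ctxt[OF Suc.IH, of "replicate (n - 1) Gb" "[]"] by simp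
  also have "\<dots> = replicate ((n - 1) + (1 + i * (n - 1))) Gb"
    by (rule replicate_add[symmetric])
  also have "(n - 1) + (1 + i * (n - 1)) = 1 + Suc i * (n - 1)"
    by simp
  finally show ?case .
qed

text \<open>Here \<open>t\<close> counts the rewriting steps \<open>ba \<rightarrow> b^n\<close> that turn \<open>w\<close> into its normal form.\<close>

lemma length_nf_invariant:
  assumes "2 \<le> n" and "nf n w = (i, j)"
  shows "\<exists>t. length w + (n - 2) * t = i + j \<and> (if j = 0 then t = 0 else (n - 1) * t + 1 \<le> j)"
  using assms(2)
proof (induction w arbitrary: i j)
  case Nil
  then show ?case by auto
next
  case (Cons c w)
  obtain i' j' where w: "nf n w = (i', j')" by fastforce
  from Cons.IH[OF w] obtain t where t: "length w + (n - 2) * t = i' + j'"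
    "if j' = 0 then t = 0 else (n - 1) * t + 1 \<le> j'" by blast
  show ?case
  proof (cases c)
    case Ga
    then have "i = Suc i'" "j = j'" using Cons.prems w by auto
    then show ?thesis using t by (intro exI[of _ t]) auto
  next
    case Gb
    then have ij: "i = 0" "j = Suc (i' * (n - 1) + j')" using Cons.prems w by auto
    obtain m where m: "n = m + 2" using assms(1) by (metis add.commute le_Suc_ex)
    have "(m + 1) * t \<le> j'" using t by (cases "j' = 0") (auto simp: m)
    then show ?thesis using t ij
      by (intro exI[of _ "t + i'"]) (auto simp: m algebra_simps)
  qed
qed

lemma nf_eq_0_0_iff: "2 \<le> n \<Longrightarrow> nf n w = (0, 0) \<longleftrightarrow> w = []"
  using length_nf_invariant[of n w 0 0] by auto

lemma length_eq_1_if_nf_eq_letter: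
  assumes "2 \<le> n" and "nf n w = nf n [c]"
  shows "length w = 1"
proof (cases c)
  case Ga
  then show ?thesis using length_nf_invariant[OF assms(1), of w 1 0] assms(2) by auto
next
  case Gb
  then obtain t where "length w + (n - 2) * t = 1" "(n - 1) * t + 1 \<le> 1"
    using length_nf_invariant[OF assms(1), of w 0 1] assms(2) by auto
  then show ?thesis using assms(1) by auto
qed

lemma length_eq_2_if_nf_eq_Ga_Gb:
  assumes "2 \<le> n" and "nf n w = nf n [Ga, Gb]"
  shows "length w = 2"
proof -
  have "nf n w = (1, 1)" using assms(2) by simp
  then obtain t where "length w + (n - 2) * t = 2" "(n - 1) * t + 1 \<le> 1"
    using length_nf_invariant[OF assms(1)] by fastforce
  then show ?thesis using assms(1) by simp
qed

lemma length_le_if_nf_eq: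
  assumes "2 \<le> n" and "nf n v = nf n w" and "v \<noteq> []"
  shows "length w + (n - 2) \<le> (n - 1) * length v"
proof -
  obtain i j where ij: "nf n v = (i, j)" by fastforce
  obtain s where s: "length v + (n - 2) * s = i + j"
    "if j = 0 then s = 0 else (n - 1) * s + 1 \<le> j"
    using length_nf_invariant[OF assms(1) ij] by blast
  obtain t where "length w + (n - 2) * t = i + j"
    using length_nf_invariant[OF assms(1)] ij assms(2) by metis
  then have w: "length w \<le> i + j" by linarith
  obtain m where m: "n = m + 2" using assms(1) by (metis add.commute le_Suc_ex)
  show ?thesis
  proof (cases "j = 0")
    case True
    then have v: "length v = i" using s by simp
    with assms(3) have "m \<le> m * i" by (cases i) auto
    moreover have "(m + 1) * i = i + m * i" by simp
    ultimately have "length w + m \<le> (m + 1) * i" using w True by linarith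
    then show ?thesis using v by (simp add: m)
  next
    case False
    then have "(m + 1) * s + 1 \<le> j" using s by (simp add: m)
    then have "m * ((m + 1) * s + 1) \<le> m * j" by (rule mult_le_mono2)
    moreover have "m * (length v + m * s) = m * (i + j)" using s by (simp add: m)
    ultimately have "length w + m \<le> (m + 1) * length v"
      using s w by (simp add: m algebra_simps)
    then show ?thesis by (simp add: m)
  qed
qed

section \<open>Lengths in \<open>B\<^sub>n\<close>\<close>

lemma lprod_Bn_letters: "lprod (Bn n) (map (\<lambda>c. bn_class n [c]) w) = bn_class n w"
  by (induction w) (auto simp: one_Bn bn_class_mult)

lemma Units_Bn:
  assumes "2 \<le> n"
  shows "bn_class n w \<in> Units (Bn n) \<longleftrightarrow> w = []"
proof
  assume "bn_class n w \<in> Units (Bn n)"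
  then obtain v where "bn_class n w \<otimes>\<^bsub>Bn n\<^esub> bn_class n v = \<one>\<^bsub>Bn n\<^esub>"
    unfolding Units_def carrier_Bn by auto
  then have "nf n (w @ v) = nf n []"
    using assms by (intro nf_eq_if_bn_class_eq) (auto simp: bn_class_mult one_Bn)
  then show "w = []" using nf_eq_0_0_iff[OF assms, of "w @ v"] by simp
next
  assume "w = []"
  then show "bn_class n w \<in> Units (Bn n)"
    unfolding Units_def carrier_Bn by (auto simp: bn_class_mult one_Bn)
qed

lemma mon_atom_Bn_iff:
  assumes "2 \<le> n"
  shows "mon_atom (Bn n) X \<longleftrightarrow> (\<exists>c. X = bn_class n [c])"
proof
  assume atom: "mon_atom (Bn n) X"
  then obtain w where X: "X = bn_class n w" by (auto simp: mon_atom_def carrier_Bn)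
  then obtain c v where w: "w = c # v"
    using atom Units_Bn[OF assms] by (cases w) (auto simp: mon_atom_def)
  have "X = bn_class n [c] \<otimes>\<^bsub>Bn n\<^esub> bn_class n v" by (simp add: X w bn_class_mult)
  then have "v = []"
    using atom Units_Bn[OF assms] unfolding mon_atom_def carrier_Bn by blast
  then show "\<exists>c. X = bn_class n [c]" using X w by auto
next
  assume "\<exists>c. X = bn_class n [c]"
  then obtain c where X: "X = bn_class n [c]" ..
  show "mon_atom (Bn n) X"
    unfolding mon_atom_def
  proof (intro conjI ballI impI)
    show "X \<in> carrier (Bn n)" "X \<notin> Units (Bn n)" using Units_Bn[OF assms] by (simp_all add: X carrier_Bn)
    fix Y Z assume "Y \<in> carrier (Bn n)" "Z \<in> carrier (Bn n)" and XYZ: "X = Y \<otimes>\<^bsub>Bn n\<^esub> Z"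
    then obtain u v where Y: "Y = bn_class n u" and Z: "Z = bn_class n v" by (auto simp: carrier_Bn)
    have "nf n (u @ v) = nf n [c]"
      using XYZ assms by (intro nf_eq_if_bn_class_eq) (simp_all add: X Y Z bn_class_mult)
    then have "length (u @ v) = 1" using length_eq_1_if_nf_eq_letter[OF assms] by blast
    then have "u = [] \<or> v = []" by (cases u) auto
    then show "Y \<in> Units (Bn n) \<or> Z \<in> Units (Bn n)" using Units_Bn[OF assms] Y Z by auto
  qed
qed

lemma atom_list_Bn_eq_letters:
  assumes "2 \<le> n" and "set xs \<subseteq> mon_atoms (Bn n)"
  shows "\<exists>w. xs = map (\<lambda>c. bn_class n [c]) w"
  using assms by (auto simp: ex_map_conv mon_atoms_def mon_atom_Bn_iff)

lemma lengths_Bn: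
  assumes "2 \<le> n" and "w \<noteq> []"
  shows "lengths (Bn n) (bn_class n w) = length ` {v. bn_class n v = bn_class n w}"
proof -
  have L: "lengths (Bn n) (bn_class n w)
      = {k. \<exists>us. length us = k \<and> set us \<subseteq> mon_atoms (Bn n) \<and> lprod (Bn n) us = bn_class n w}"
    using assms by (simp add: lengths_def Units_Bn)
  show ?thesis
  proof (intro equalityI subsetI)
    fix k assume "k \<in> lengths (Bn n) (bn_class n w)"
    then obtain us where us: "length us = k" "set us \<subseteq> mon_atoms (Bn n)" "lprod (Bn n) us = bn_class n w"
      unfolding L by blast
    then obtain v where "us = map (\<lambda>c. bn_class n [c]) v"
      using atom_list_Bn_eq_letters[OF assms(1)] by blast
    with us show "k \<in> length ` {v. bn_class n v = bn_class n w}"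
      by (auto simp: lprod_Bn_letters)
  next
    fix k assume "k \<in> length ` {v. bn_class n v = bn_class n w}"
    then obtain v where v: "k = length v" "bn_class n v = bn_class n w" by blast
    have "set (map (\<lambda>c. bn_class n [c]) v) \<subseteq> mon_atoms (Bn n)"
      using assms(1) by (auto simp: mon_atoms_def mon_atom_Bn_iff)
    with v show "k \<in> lengths (Bn n) (bn_class n w)"
      unfolding L by (auto simp: lprod_Bn_letters intro!: exI[of _ "map (\<lambda>c. bn_class n [c]) v"])
  qed
qed

lemma lengths_Bn_letter:
  assumes "2 \<le> n"
  shows "lengths (Bn n) (bn_class n [c]) = {1}"
proof -
  have "length v = 1" if "bn_class n v = bn_class n [c]" for v
    using that assms by (intro length_eq_1_if_nf_eq_letter nf_eq_if_bn_class_eq) simp_all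
  moreover have "length [c] \<in> length ` {v. bn_class n v = bn_class n [c]}" by blast
  ultimately show ?thesis using lengths_Bn[OF assms, of "[c]"] by auto
qed

lemma lengths_Bn_Ga_Gb:
  assumes "2 \<le> n"
  shows "lengths (Bn n) (bn_class n [Ga, Gb]) = {2}"
proof -
  have "length v = 2" if "bn_class n v = bn_class n [Ga, Gb]" for v
    using that assms by (intro length_eq_2_if_nf_eq_Ga_Gb nf_eq_if_bn_class_eq) simp_all
  moreover have "length [Ga, Gb] \<in> length ` {v. bn_class n v = bn_class n [Ga, Gb]}" by blast
  ultimately show ?thesis using lengths_Bn[OF assms, of "[Ga, Gb]"] by auto
qed

lemma system_of_lengths_Bn_bound:
  assumes "2 \<le> n" and "L \<in> system_of_lengths (Bn n)" and "k \<in> L" "l \<in> L" "k \<noteq> 0"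
  shows "l + (n - 2) \<le> (n - 1) * k"
proof -
  obtain w where L: "L = lengths (Bn n) (bn_class n w)"
    using assms(2) by (auto simp: system_of_lengths_def carrier_Bn)
  have "w \<noteq> []"
  proof
    assume "w = []"
    then have "L = {0}" using Units_Bn[OF assms(1)] by (simp add: L lengths_def)
    then show False using assms(3,5) by simp
  qed
  then have L': "L = length ` {v. bn_class n v = bn_class n w}"
    using L lengths_Bn[OF assms(1)] by simp
  obtain u where u: "k = length u" "bn_class n u = bn_class n w" using assms(3) L' by blast
  obtain v where v: "l = length v" "bn_class n v = bn_class n w" using assms(4) L' by blast
  have "nf n u = nf n v"
    using assms(1) u v by (intro nf_eq_if_bn_class_eq) simp_all
  then show ?thesis using length_le_if_nf_eq[OF assms(1)] assms(5) u v by auto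
qed

lemma system_of_lengths_Bn_spread:
  assumes "2 \<le> n" and "s \<noteq> 0"
  shows "\<exists>L \<in> system_of_lengths (Bn n). s \<in> L \<and> 1 + (s - 1) * (n - 1) \<in> L"
proof
  define w where "w = Gb # replicate (s - 1) Ga"
  have L: "lengths (Bn n) (bn_class n w) = length ` {v. bn_class n v = bn_class n w}"
    using assms(1) by (rule lengths_Bn) (simp add: w_def)
  have "bn_class n (replicate (1 + (s - 1) * (n - 1)) Gb) = bn_class n w"
    using bn_cong_Gb_replicate_Ga[of n "s - 1"] assms(1)
    by (simp add: w_def bn_class_eq_iff bn_cong.sym)
  moreover have "length w = s" using assms(2) by (simp add: w_def)
  ultimately show "s \<in> lengths (Bn n) (bn_class n w) \<and> 1 + (s - 1) * (n - 1) \<in> lengths (Bn n) (bn_class n w)"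
    unfolding L by (metis (mono_tags) image_eqI length_replicate mem_Collect_eq)
  show "lengths (Bn n) (bn_class n w) \<in> system_of_lengths (Bn n)"
    by (simp add: system_of_lengths_def carrier_Bn)
qed

lemma mon_hom_Bn_bn_class:
  assumes "mon_hom (Bn n) B f"
  shows "f (bn_class n w) = lprod B (map (\<lambda>c. f (bn_class n [c])) w)"
proof (induction w)
  case Nil
  then show ?case using assms by (simp add: mon_hom_def one_Bn)
next
  case (Cons c w)
  have "f (bn_class n (c # w)) = f (bn_class n [c] \<otimes>\<^bsub>Bn n\<^esub> bn_class n w)"
    by (simp add: bn_class_mult)
  also have "\<dots> = f (bn_class n [c]) \<otimes>\<^bsub>B\<^esub> f (bn_class n w)"
    using assms by (simp add: mon_hom_def carrier_Bn)
  finally show ?case using Cons by simp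
qed

lemma rel_list_length_bound_if_lengths_Bn:
  assumes "monoid H" "mon_cancellative H" "2 \<le> n"
    and sub: "system_of_lengths H \<subseteq> system_of_lengths (Bn n)"
    and rel: "(xs, ys) \<in> rel_list H" and "xs \<noteq> []"
  shows "length ys + (n - 2) \<le> (n - 1) * length xs"
proof -
  have atoms: "set xs \<subseteq> mon_atoms H" "set ys \<subseteq> mon_atoms H" and eq: "lprod H xs = lprod H ys"
    using rel by (simp_all add: rel_list_def)
  have "ys \<noteq> []"
    using rel_list_Nil[OF assms(1,2), of xs] rel \<open>xs \<noteq> []\<close> by (auto simp: rel_list_def)
  then have "length xs \<in> lengths H (lprod H xs)" "length ys \<in> lengths H (lprod H xs)"
    using length_mem_lengths[OF assms(1,2)] atoms eq \<open>xs \<noteq> []\<close> by metis+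
  moreover have "lengths H (lprod H xs) \<in> system_of_lengths (Bn n)"
    using sub lprod_closed[OF assms(1)] atoms mon_atoms_subset_carrier[of H]
    by (auto simp: system_of_lengths_def)
  ultimately show ?thesis
    using system_of_lengths_Bn_bound[OF assms(3)] \<open>xs \<noteq> []\<close> by blast
qed

lemma rel_list_length_spread_if_lengths_Bn:
  assumes "2 \<le> n" and sup: "system_of_lengths (Bn n) \<subseteq> system_of_lengths H" and "s \<noteq> 0"
  shows "\<exists>(xs, ys) \<in> rel_list H. length xs = s \<and> length ys = 1 + (s - 1) * (n - 1)"
proof -
  obtain L where L: "L \<in> system_of_lengths (Bn n)" "s \<in> L" "1 + (s - 1) * (n - 1) \<in> L"
    using system_of_lengths_Bn_spread[OF assms(1,3)] by blast
  then obtain y where y: "y \<in> carrier H" "L = lengths H y"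
    using sup by (auto simp: system_of_lengths_def)
  then have "y \<notin> Units H" using L(2) \<open>s \<noteq> 0\<close> by (auto simp: lengths_def)
  then obtain xs ys where "length xs = s" "length ys = 1 + (s - 1) * (n - 1)"
    "set xs \<subseteq> mon_atoms H" "set ys \<subseteq> mon_atoms H" "lprod H xs = y" "lprod H ys = y"
    using L(2,3) y(2) by (auto simp: lengths_def)
  then have "(xs, ys) \<in> rel_list H \<and> length xs = s \<and> length ys = 1 + (s - 1) * (n - 1)"
    by (simp add: rel_list_def)
  then show ?thesis by blast
qed

lemma system_of_lengths_ne_Bn:
  assumes "3 \<le> n" "monoid H" "mon_cancellative H" "relations_fg H"
  shows "system_of_lengths H \<noteq> system_of_lengths (Bn n)"
proof
  assume eq: "system_of_lengths H = system_of_lengths (Bn n)"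
  have "n - 1 = (n - 2) + 1" using assms(1) by simp
  then have "\<not> relations_fg H"
    using rel_list_Nil[OF assms(2,3)] assms(1) eq
      rel_list_length_bound_if_lengths_Bn[OF assms(2,3), of n]
      rel_list_length_spread_if_lengths_Bn[of n H]
    by (intro not_relations_fg_if_length_spread[where d = "n - 2"]) auto
  then show False using assms(4) by contradiction
qed

lemma not_weak_transfer_hom_Bn:
  assumes "3 \<le> n" and "comm_monoid B" "mon_atomic B"
  shows "\<not> weak_transfer_hom (Bn n) B \<theta>"
proof
  assume wt: "weak_transfer_hom (Bn n) B \<theta>"
  then have hom: "mon_hom (Bn n) B \<theta>"
    and units: "{h \<in> carrier (Bn n). \<theta> h \<in> Units B} = Units (Bn n)"
    by (simp_all add: weak_transfer_hom_def)
  interpret B: comm_monoid B by fact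
  have n: "2 \<le> n" using assms(1) by simp
  define a where "a = bn_class n [Ga]"
  define b where "b = bn_class n [Gb]"
  have ab_carrier: "a \<in> carrier (Bn n)" "b \<in> carrier (Bn n)" by (simp_all add: a_def b_def carrier_Bn)
  then have \<theta>ab_carrier: "\<theta> a \<in> carrier B" "\<theta> b \<in> carrier B" using hom by (simp_all add: mon_hom_def)
  have "b \<notin> Units (Bn n)" using Units_Bn[OF n] by (simp add: b_def)
  then have "\<theta> b \<notin> Units B" using units ab_carrier by blast
  then obtain vs where vs: "set vs \<subseteq> mon_atoms B" "lprod B vs = \<theta> b"
    using assms(3) \<theta>ab_carrier unfolding mon_atomic_def by blast
  have "length vs \<in> lengths (Bn n) b"
    using weak_transfer_hom_length_mem_lengths[OF wt] ab_carrier \<open>b \<notin> Units (Bn n)\<close> vs by simp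
  then have "length vs = 1" using lengths_Bn_letter[OF n] by (simp add: b_def)
  then obtain v where v: "\<theta> b = v" "v \<in> mon_atoms B"
    using vs mon_atoms_subset_carrier[of B] by (cases vs) auto
  have "\<theta> (bn_class n [Ga, Gb]) = \<theta> (bn_class n [Gb, Ga])"
    using mon_hom_Bn_bn_class[OF hom, of "[Ga, Gb]"] mon_hom_Bn_bn_class[OF hom, of "[Gb, Ga]"]
      \<theta>ab_carrier B.m_comm by (simp add: a_def b_def)
  also have "\<dots> = \<theta> (bn_class n (replicate n Gb))"
    by (rule arg_cong[where f = \<theta>]) (simp only: bn_class_eq_iff bn_cong.base)
  also have "\<dots> = lprod B (replicate n v)"
    using mon_hom_Bn_bn_class[OF hom, of "replicate n Gb"] v(1) by (simp add: b_def map_replicate_const)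
  finally have "length (replicate n v) \<in> lengths (Bn n) (bn_class n [Ga, Gb])"
    using v(2) Units_Bn[OF n]
    by (intro weak_transfer_hom_length_mem_lengths[OF wt]) (simp_all add: carrier_Bn set_replicate_conv_if)
  then show False using lengths_Bn_Ga_Gb[OF n] assms(1) by simp
qed

lemma not_transfer_krull_Bn:
  assumes "3 \<le> n"
  shows "\<not> transfer_krull (Bn n) TYPE('b) TYPE('p)"
  using not_weak_transfer_hom_Bn[OF assms]
  by (auto simp: transfer_krull_def krull_monoid_def)

theorem corollary4p4:
  fixes n :: nat
  assumes "n \<ge> 3"
  shows "(\<forall>H :: 'a monoid. monoid H \<and> mon_reduced H \<and> mon_atomic H \<and> mon_cancellative H
            \<and> relations_fg H \<longrightarrow> system_of_lengths H \<noteq> system_of_lengths (Bn n))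
       \<and> \<not> transfer_krull (Bn n) TYPE('b) TYPE('p)"
  using system_of_lengths_ne_Bn[OF assms] not_transfer_krull_Bn[OF assms] by blast

end
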